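(* Consider the $M/G/\infty$ queueing system: customers arrive according to a Poisson process of rate $\lambda>0$, there are infinitely many servers (so every arriving customer immediately starts service), and service times are i.i.d. with continuous distribution function $B(x)$, independent of the arrival process. Let $\overline{B}(x)=1-B(x)$ and suppose $B$ has a light tail: there exist constants $C>0$ and $\mu>0$ such that $\overline{B}(x)\le Ce^{-\mu x}$ for all $x\ge 0$. Put $b=\int_0^\infty\overline{B}(x)\,dx$ and $\rho=\lambda b$. Let $Q(t)$ be the number of customers in the system at time $t$, with $P(Q(0)=0)=1$, let $P_k(t)=P(Q(t)=k)$, $P_k=\frac{\rho^k}{k!}e^{-\rho}$ for $k\ge 0$, and $\varphi(t)=\sup_{k\ge 0}|P_k(t)-P_k|$. Then there exist constants $\delta>0$ and $0<C_\delta<\infty$ such that $$\varphi(t)<C_\delta e^{-\delta t}\qquad\text{for all } t\ge 0.$$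
   Context: $P_k$ is the stationary (limiting) distribution of $Q(t)$, i.e. $P_k=\lim_{t\to\infty}P(Q(t)=k)$. *)

theory Defs
  imports "HOL-Probability.Probability"
begin

definition arrival_time :: "(nat \<Rightarrow> 'a \<Rightarrow> real) \<Rightarrow> nat \<Rightarrow> 'a \<Rightarrow> real" where
  "arrival_time E n \<omega> = (\<Sum>i\<le>n. E i \<omega>)"

definition queue_length ::
  "(nat \<Rightarrow> 'a \<Rightarrow> real) \<Rightarrow> (nat \<Rightarrow> 'a \<Rightarrow> real) \<Rightarrow> real \<Rightarrow> 'a \<Rightarrow> nat" where
  "queue_length E S t \<omega> =
     card {n. arrival_time E n \<omega> \<le> t \<and> t < arrival_time E n \<omega> + S n \<omega>}"

definition poisson_prob :: "real \<Rightarrow> nat \<Rightarrow> real" where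
  "poisson_prob \<rho> k = \<rho> ^ k / fact k * exp (- \<rho>)"

end

theory Submission
  imports Defs
begin

(* Conditioning on the first customer (arrival time E 0, service time S 0), which is independent
   of the remaining customers, the transient distribution p(t, k) of the queue length satisfies
   the renewal equation
     p(t, k) = E[ B(t - E 0) p(t - E 0, k) + (1 - B(t - E 0)) p(t - E 0, k - 1) ]
   (the first customer is still present at t with probability 1 - B(t - E 0)).  The Poisson
   probabilities with mean lam * int_0^t (1 - B) solve the same equation, which is checked by the
   fundamental theorem of calculus.  Since the equation holds for every shifted input, the
   difference of two solutions on [0, T] is contracted by the factor P(E 0 <= T) < 1, so the two
   coincide.  Finally Poisson probabilities are 1-Lipschitz in their mean, and the mean differs
   from its limit lam * b by lam * int_t^oo (1 - B) <= lam * C / mu * exp (- mu * t). *)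

section \<open>Poisson probabilities\<close>

lemma poisson_prob_nonneg: "0 \<le> \<rho> \<Longrightarrow> 0 \<le> poisson_prob \<rho> k"
  by (simp add: poisson_prob_def)

lemma poisson_prob_le_1:
  assumes "0 \<le> \<rho>" shows "poisson_prob \<rho> k \<le> 1"
proof (cases "\<rho> = 0")
  case False
  then have "poisson_prob \<rho> k = pmf (poisson_pmf \<rho>) k"
    using assms by (simp add: poisson_prob_def)
  then show ?thesis by (simp add: pmf_le_1)
qed (cases k, simp_all add: poisson_prob_def)

lemma poisson_prob_0: "poisson_prob 0 k = (if k = 0 then 1 else 0)"
  by (simp add: poisson_prob_def)

definition poisson_prob_prev :: "real \<Rightarrow> nat \<Rightarrow> real" where
  "poisson_prob_prev \<rho> k = (if k = 0 then 0 else poisson_prob \<rho> (k - 1))"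

lemma poisson_prob_prev_bounds: "0 \<le> \<rho> \<Longrightarrow> 0 \<le> poisson_prob_prev \<rho> k \<and> poisson_prob_prev \<rho> k \<le> 1"
  by (simp add: poisson_prob_prev_def poisson_prob_nonneg poisson_prob_le_1)

lemma has_real_derivative_poisson_prob:
  "((\<lambda>\<rho>. poisson_prob \<rho> k) has_real_derivative poisson_prob_prev \<rho> k - poisson_prob \<rho> k) (at \<rho>)"
proof (cases k)
  case 0
  then show ?thesis
    unfolding poisson_prob_def poisson_prob_prev_def by (auto intro!: derivative_eq_intros)
next
  case (Suc m)
  have "real k / fact k = 1 / fact m"
    using Suc by (simp add: fact_Suc del: of_nat_Suc)
  then have "real k * \<rho> ^ (k - 1) * 1 / fact k * exp (- \<rho>) + \<rho> ^ k / fact k * (exp (- \<rho>) * (- 1))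
      = poisson_prob_prev \<rho> k - poisson_prob \<rho> k"
    using Suc by (simp add: poisson_prob_prev_def poisson_prob_def)
  moreover have "((\<lambda>\<rho>. \<rho> ^ k / fact k * exp (- \<rho>)) has_real_derivative
      real k * \<rho> ^ (k - 1) * 1 / fact k * exp (- \<rho>) + \<rho> ^ k / fact k * (exp (- \<rho>) * (- 1))) (at \<rho>)"
    by (auto intro!: derivative_eq_intros simp: diff_divide_distrib)
  ultimately show ?thesis
    unfolding poisson_prob_def[abs_def] by simp
qed

lemma poisson_prob_lipschitz:
  assumes "0 \<le> \<rho>" "0 \<le> \<sigma>"
  shows "\<bar>poisson_prob \<rho> k - poisson_prob \<sigma> k\<bar> \<le> \<bar>\<rho> - \<sigma>\<bar>"
proof -
  have *: "\<bar>poisson_prob b k - poisson_prob a k\<bar> \<le> b - a" if "0 \<le> a" "a < b" for a b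
  proof -
    obtain z where z: "a < z" "z < b"
      and eq: "poisson_prob b k - poisson_prob a k = (b - a) * (poisson_prob_prev z k - poisson_prob z k)"
      using MVT2[OF \<open>a < b\<close> has_real_derivative_poisson_prob] by blast
    have "\<bar>poisson_prob_prev z k - poisson_prob z k\<bar> \<le> 1"
      using z that poisson_prob_prev_bounds[of z k] poisson_prob_nonneg[of z k] poisson_prob_le_1[of z k]
      by auto
    then show ?thesis
      using eq that by (simp add: abs_mult mult_left_le)
  qed
  show ?thesis
    using *[of \<rho> \<sigma>] *[of \<sigma> \<rho>] assms by (cases \<rho> \<sigma> rule: linorder_cases) (auto simp: abs_minus_commute)
qed

section \<open>The integrated survival function\<close>

definition integrated_survival :: "(real \<Rightarrow> real) \<Rightarrow> real \<Rightarrow> real" where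
  "integrated_survival B t = integral {0..t} (\<lambda>x. 1 - B x)"

lemma integrated_survival_nonpos: "t \<le> 0 \<Longrightarrow> integrated_survival B t = 0"
  by (cases "t = 0") (simp_all add: integrated_survival_def)

context
  fixes B :: "real \<Rightarrow> real"
  assumes B_cont: "continuous_on UNIV B"
begin

lemma continuous_on_survival: "continuous_on A (\<lambda>x. 1 - B x)"
  by (intro continuous_intros continuous_on_subset[OF B_cont]) simp

lemma has_vector_derivative_integrated_survival:
  "x \<in> {0..T} \<Longrightarrow> (integrated_survival B has_vector_derivative 1 - B x) (at x within {0..T})"
  unfolding integrated_survival_def[abs_def]
  by (rule integral_has_vector_derivative[OF continuous_on_survival])

lemma has_real_derivative_integrated_survival:
  assumes "0 < x" shows "(integrated_survival B has_real_derivative 1 - B x) (at x)"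
proof -
  have int: "x \<in> interior {0..x + 1}" using assms by auto
  have "(integrated_survival B has_vector_derivative 1 - B x) (at x within {0..x + 1})"
    using assms by (intro has_vector_derivative_integrated_survival) auto
  then show ?thesis
    unfolding at_within_interior[OF int] by (simp add: has_real_derivative_iff_has_vector_derivative)
qed

lemma continuous_on_integrated_survival: "continuous_on {0..T} (integrated_survival B)"
  using has_vector_derivative_integrated_survival[THEN has_vector_derivative_continuous]
  by (simp add: continuous_on_eq_continuous_within)

lemma survival_integrable: "(\<lambda>x. 1 - B x) integrable_on {a..b}"
  by (intro integrable_continuous_real continuous_on_survival)

context
  assumes B_le_1: "\<And>x. B x \<le> 1"
begin

lemma survival_integral_nonneg: "0 \<le> integral {a..b} (\<lambda>x. 1 - B x)"
  using B_le_1 by (intro integral_nonneg survival_integrable) auto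

lemma integrated_survival_nonneg: "0 \<le> integrated_survival B t"
  unfolding integrated_survival_def by (rule survival_integral_nonneg)

lemma mono_integrated_survival: "mono (integrated_survival B)"
proof
  fix s t :: real assume "s \<le> t"
  show "integrated_survival B s \<le> integrated_survival B t"
  proof (cases "s < 0")
    case True
    then have "integrated_survival B s = 0" by (simp add: integrated_survival_nonpos)
    then show ?thesis using integrated_survival_nonneg[of t] by simp
  next
    case False
    have "integral {0..s} (\<lambda>x. 1 - B x) + integral {s..t} (\<lambda>x. 1 - B x) = integral {0..t} (\<lambda>x. 1 - B x)"
      using False \<open>s \<le> t\<close> by (intro Henstock_Kurzweil_Integration.integral_combine survival_integrable) auto
    moreover have "0 \<le> integral {s..t} (\<lambda>x. 1 - B x)" by (rule survival_integral_nonneg)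
    ultimately show ?thesis unfolding integrated_survival_def by linarith
  qed
qed

lemma borel_measurable_integrated_survival: "integrated_survival B \<in> borel_measurable borel"
  by (rule borel_measurable_mono[OF mono_integrated_survival])

context
  fixes C \<mu> :: real
  assumes \<mu>: "0 < \<mu>" and tail: "\<And>x. 0 \<le> x \<Longrightarrow> 1 - B x \<le> C * exp (- \<mu> * x)"
begin

lemma survival_integral_tail:
  assumes "0 \<le> c"
  shows "(\<lambda>x. 1 - B x) integrable_on {c..}" and "integral {c..} (\<lambda>x. 1 - B x) \<le> C / \<mu> * exp (- \<mu> * c)"
proof -
  have exp_int: "((\<lambda>x. C * exp (- \<mu> * x)) has_integral C * (exp (- \<mu> * c) / \<mu>)) {c..}"
    by (intro has_integral_mult_right has_integral_exp_minus_to_infinity \<mu>)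
  show int: "(\<lambda>x. 1 - B x) integrable_on {c..}"
  proof (rule measurable_bounded_by_integrable_imp_integrable_real)
    show "(\<lambda>x. 1 - B x) \<in> borel_measurable (lebesgue_on {c..})"
      by (intro continuous_imp_measurable_on_sets_lebesgue continuous_on_survival) auto
    show "(\<lambda>x. C * exp (- \<mu> * x)) integrable_on {c..}"
      using exp_int by blast
    show "\<bar>1 - B x\<bar> \<le> C * exp (- \<mu> * x)" if "x \<in> {c..}" for x
      using tail[of x] B_le_1[of x] that assms by auto
  qed auto
  have "integral {c..} (\<lambda>x. 1 - B x) \<le> integral {c..} (\<lambda>x. C * exp (- \<mu> * x))"
    using tail assms by (intro integral_le int) (use exp_int in \<open>auto simp: integrable_on_def\<close>)
  also have "\<dots> = C / \<mu> * exp (- \<mu> * c)"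
    using integral_unique[OF exp_int] by simp
  finally show "integral {c..} (\<lambda>x. 1 - B x) \<le> C / \<mu> * exp (- \<mu> * c)" .
qed

lemma integral_survival_split:
  assumes "0 \<le> t"
  shows "(LINT x:{0..}|lborel. 1 - B x) = integrated_survival B t + integral {t..} (\<lambda>x. 1 - B x)"
proof -
  have head: "((\<lambda>x. 1 - B x) has_integral integrated_survival B t) {0..t}"
    unfolding integrated_survival_def by (intro integrable_integral survival_integrable)
  have rest: "((\<lambda>x. 1 - B x) has_integral integral {t..} (\<lambda>x. 1 - B x)) {t..}"
    using survival_integral_tail(1)[OF assms] by (simp add: integrable_integral)
  have "((\<lambda>x. 1 - B x) has_integral integrated_survival B t + integral {t..} (\<lambda>x. 1 - B x)) ({0..t} \<union> {t..})"
  proof (rule has_integral_Un[OF head rest])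
    have "{0..t} \<inter> {t..} = {t}" using assms by auto
    then show "negligible ({0..t} \<inter> {t..})" by simp
  qed
  moreover have "{0..t} \<union> {t..} = {0::real..}" using assms by auto
  ultimately have int: "((\<lambda>x. 1 - B x) has_integral integrated_survival B t + integral {t..} (\<lambda>x. 1 - B x)) {0..}"
    by simp
  have "(\<lambda>x. 1 - B x) absolutely_integrable_on {0..}"
    using int B_le_1 by (intro nonnegative_absolutely_integrable_1) (auto simp: integrable_on_def)
  then have "(LINT x:{0..}|lebesgue. 1 - B x) = integral {0..} (\<lambda>x. 1 - B x)"
    by (intro set_lebesgue_integral_eq_integral(2)) (simp add: absolutely_integrable_on_def)
  also have "\<dots> = integrated_survival B t + integral {t..} (\<lambda>x. 1 - B x)"
    using int by (rule integral_unique)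
  also have "(LINT x:{0..}|lebesgue. 1 - B x) = (LINT x:{0..}|lborel. 1 - B x)"
    unfolding set_lebesgue_integral_def
    using borel_measurable_continuous_onI[OF B_cont] by (intro integral_completion) simp
  finally show ?thesis .
qed

lemma integrated_survival_le_mean:
  assumes "0 \<le> t" shows "integrated_survival B t \<le> (LINT x:{0..}|lborel. 1 - B x)"
proof -
  have "0 \<le> integral {t..} (\<lambda>x. 1 - B x)"
    using survival_integral_tail(1)[OF assms] B_le_1 by (intro integral_nonneg) auto
  then show ?thesis using integral_survival_split[OF assms] by linarith
qed

lemma mean_minus_integrated_survival:
  "0 \<le> t \<Longrightarrow> (LINT x:{0..}|lborel. 1 - B x) - integrated_survival B t \<le> C / \<mu> * exp (- \<mu> * t)"
  using integral_survival_split[of t] survival_integral_tail(2)[of t] by linarith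

end

end

end

text \<open>A sample path \<open>x\<close> stores the interarrival times in \<open>x (Inl n)\<close> and the service times
  in \<open>x (Inr n)\<close>, so that the whole input of the queue is a single point of a product space.\<close>

definition arrival :: "(nat + nat \<Rightarrow> real) \<Rightarrow> nat \<Rightarrow> real" where
  "arrival x n = (\<Sum>i\<le>n. x (Inl i))"

definition in_system :: "real \<Rightarrow> (nat + nat \<Rightarrow> real) \<Rightarrow> nat set" where
  "in_system t x = {n. arrival x n \<le> t \<and> t < arrival x n + x (Inr n)}"

definition shift_path :: "(nat + nat \<Rightarrow> real) \<Rightarrow> nat + nat \<Rightarrow> real" where
  "shift_path x = x \<circ> map_sum Suc Suc"

definition sample_path :: "(nat \<Rightarrow> 'a \<Rightarrow> real) \<Rightarrow> (nat \<Rightarrow> 'a \<Rightarrow> real) \<Rightarrow> 'a \<Rightarrow> nat + nat \<Rightarrow> real" where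
  "sample_path E S \<omega> i = (case i of Inl n \<Rightarrow> E n \<omega> | Inr n \<Rightarrow> S n \<omega>)"

lemma sample_path_simps [simp]:
  "sample_path E S \<omega> (Inl n) = E n \<omega>" "sample_path E S \<omega> (Inr n) = S n \<omega>"
  by (simp_all add: sample_path_def)

lemma queue_length_eq_card_in_system:
  "queue_length E S t \<omega> = card (in_system t (sample_path E S \<omega>))"
  by (simp add: queue_length_def in_system_def arrival_def arrival_time_def)

lemma shift_path_simps [simp]:
  "shift_path x (Inl n) = x (Inl (Suc n))" "shift_path x (Inr n) = x (Inr (Suc n))"
  by (simp_all add: shift_path_def)

lemma sample_path_map_sum_Suc:
  "sample_path E S \<omega> (map_sum Suc Suc i) = sample_path (\<lambda>n. E (Suc n)) (\<lambda>n. S (Suc n)) \<omega> i"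
  by (cases i) simp_all

lemma shift_sample_path:
  "shift_path (sample_path E S \<omega>) = sample_path (\<lambda>n. E (Suc n)) (\<lambda>n. S (Suc n)) \<omega>"
  by (simp add: fun_eq_iff shift_path_def sample_path_map_sum_Suc)

lemma arrival_Suc: "arrival x (Suc n) = x (Inl 0) + arrival (shift_path x) n"
  unfolding arrival_def sum.atMost_Suc_shift by simp

lemma in_system_shift:
  "in_system t x = (if x (Inl 0) \<le> t \<and> t < x (Inl 0) + x (Inr 0) then {0} else {})
     \<union> Suc ` in_system (t - x (Inl 0)) (shift_path x)"
proof -
  have "n \<in> in_system t x \<longleftrightarrow> n \<in> (if x (Inl 0) \<le> t \<and> t < x (Inl 0) + x (Inr 0) then {0} else {})
    \<union> Suc ` in_system (t - x (Inl 0)) (shift_path x)" for n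
  proof (cases n)
    case (Suc m)
    have "Suc m \<in> Suc ` in_system (t - x (Inl 0)) (shift_path x) \<longleftrightarrow> m \<in> in_system (t - x (Inl 0)) (shift_path x)"
      by auto
    then show ?thesis using Suc by (auto simp: in_system_def arrival_Suc)
  qed (auto simp: in_system_def arrival_def)
  then show ?thesis by blast
qed

lemma card_in_system_shift:
  assumes "finite (in_system (t - x (Inl 0)) (shift_path x))"
  shows "card (in_system t x) = of_bool (x (Inl 0) \<le> t \<and> t < x (Inl 0) + x (Inr 0))
    + card (in_system (t - x (Inl 0)) (shift_path x))"
  using assms by (subst in_system_shift) (auto simp: card_image)

context
  fixes x :: "nat + nat \<Rightarrow> real"
  assumes interarrival_nonneg: "\<And>n. 0 \<le> x (Inl n)"
begin

lemma mono_arrival: "mono (arrival x)"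
  unfolding arrival_def by (intro monoI sum_mono2) (auto simp: interarrival_nonneg)

lemma arrival_nonneg: "0 \<le> arrival x n"
  unfolding arrival_def by (intro sum_nonneg interarrival_nonneg)

lemma in_system_neg:
  assumes "t < 0" shows "in_system t x = {}"
proof -
  have "\<not> arrival x n \<le> t" for n using arrival_nonneg[of n] assms by linarith
  then show ?thesis by (simp add: in_system_def)
qed

lemma finite_in_system:
  assumes "t < arrival x N" shows "finite (in_system t x)"
proof (rule finite_subset)
  show "in_system t x \<subseteq> {..<N}"
    using assms monoD[OF mono_arrival, of N] by (force simp: in_system_def not_less[symmetric])
qed simp

end

abbreviation path_space :: "(nat + nat \<Rightarrow> real) measure" where
  "path_space \<equiv> PiM UNIV (\<lambda>_. borel)"

lemma measurable_path_component [measurable]: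
  assumes [measurable]: "g \<in> measurable M path_space"
  shows "(\<lambda>\<omega>. g \<omega> i) \<in> borel_measurable M"
  by measurable

lemma measurable_arrival [measurable]:
  "g \<in> measurable M path_space \<Longrightarrow> (\<lambda>\<omega>. arrival (g \<omega>) n) \<in> borel_measurable M"
  unfolding arrival_def by measurable

lemma pred_mem_in_system [measurable]:
  assumes [measurable]: "f \<in> borel_measurable M" "g \<in> measurable M path_space"
  shows "Measurable.pred M (\<lambda>\<omega>. n \<in> in_system (f \<omega>) (g \<omega>))"
  unfolding in_system_def by measurable

lemma (in prob_space) indep_sets_reindex:
  assumes ind: "indep_sets F (f ` I)" and inj: "inj_on f I"
  shows "indep_sets (\<lambda>i. F (f i)) I"
  unfolding indep_sets_def
proof (intro conjI ballI allI impI)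
  fix i assume "i \<in> I" then show "F (f i) \<subseteq> events" using ind by (auto simp: indep_sets_def)
next
  fix J A assume J: "J \<subseteq> I" "J \<noteq> {}" "finite J" and A: "A \<in> Pi J (\<lambda>i. F (f i))"
  have injJ: "inj_on f J" using inj J(1) inj_on_subset by blast
  define A' where "A' = (\<lambda>j. A (the_inv_into J f j))"
  have A'f: "A' (f i) = A i" if "i \<in> J" for i
    unfolding A'_def using the_inv_into_f_f[OF injJ that] by simp
  have "A' \<in> Pi (f ` J) F" using A A'f by auto
  moreover have "f ` J \<subseteq> f ` I" "f ` J \<noteq> {}" "finite (f ` J)" using J by auto
  ultimately have "prob (\<Inter>j\<in>f ` J. A' j) = (\<Prod>j\<in>f ` J. prob (A' j))"
    using ind unfolding indep_sets_def by blast
  moreover have "(\<Inter>j\<in>f ` J. A' j) = (\<Inter>i\<in>J. A i)" using A'f by auto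
  moreover have "(\<Prod>j\<in>f ` J. prob (A' j)) = (\<Prod>i\<in>J. prob (A i))"
    using A'f by (simp add: prod.reindex[OF injJ])
  ultimately show "prob (\<Inter>j\<in>J. A j) = (\<Prod>j\<in>J. prob (A j))" by simp
qed

lemma (in prob_space) indep_vars_reindex:
  assumes "indep_vars M' X (f ` I)" and "inj_on f I"
  shows "indep_vars (\<lambda>i. M' (f i)) (\<lambda>i. X (f i)) I"
  using assms unfolding indep_vars_def2
  by (auto intro: indep_sets_reindex[where F="\<lambda>i. {X i -` A \<inter> space M |A. A \<in> sets (M' i)}"])

lemma (in prob_space) indep_var_restrict_compose:
  assumes "indep_vars (\<lambda>_. N) X I" "A \<inter> B = {}" "A \<subseteq> I" "B \<subseteq> I"
    and "f \<in> measurable (PiM A (\<lambda>_. N)) N1" "g \<in> measurable (PiM B (\<lambda>_. N)) N2"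
  shows "indep_var N1 (\<lambda>\<omega>. f (\<lambda>i\<in>A. X i \<omega>)) N2 (\<lambda>\<omega>. g (\<lambda>i\<in>B. X i \<omega>))"
  using indep_var_compose[OF indep_var_restrict[OF assms(1-4)] assms(5,6)] by (simp add: comp_def)

lemma (in prob_space) integral_indep_var:
  fixes g :: "'b \<Rightarrow> 'b \<Rightarrow> real"
  assumes indep: "indep_var N X N' Y"
    and g: "case_prod g \<in> borel_measurable (N \<Otimes>\<^sub>M N')" and bounded: "\<And>x y. \<bar>g x y\<bar> \<le> c"
  shows "(\<integral>\<omega>. g (X \<omega>) (Y \<omega>) \<partial>M) = (\<integral>\<omega>. (\<integral>\<omega>'. g (X \<omega>) (Y \<omega>') \<partial>M) \<partial>M)"
proof -
  have X: "X \<in> measurable M N" and Y: "Y \<in> measurable M N'"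
    using indep by (auto dest: indep_var_rv1 indep_var_rv2)
  interpret X: prob_space "distr M N X" using X by (rule prob_space_distr)
  interpret Y: prob_space "distr M N' Y" using Y by (rule prob_space_distr)
  interpret XY: pair_prob_space "distr M N X" "distr M N' Y" ..
  have g': "case_prod g \<in> borel_measurable (distr M N X \<Otimes>\<^sub>M distr M N' Y)"
    using g by (simp add: measurable_def sets_pair_measure_cong[OF sets_distr sets_distr] space_pair_measure)
  have "(\<integral>\<omega>. g (X \<omega>) (Y \<omega>) \<partial>M) = (\<integral>p. case_prod g p \<partial>distr M (N \<Otimes>\<^sub>M N') (\<lambda>\<omega>. (X \<omega>, Y \<omega>)))"
    using X Y g by (subst integral_distr) auto
  also have "\<dots> = (\<integral>p. case_prod g p \<partial>(distr M N X \<Otimes>\<^sub>M distr M N' Y))"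
    using indep by (simp add: indep_var_distribution_eq)
  also have "\<dots> = (\<integral>x. (\<integral>y. g x y \<partial>distr M N' Y) \<partial>distr M N X)"
  proof -
    have "integrable (distr M N X \<Otimes>\<^sub>M distr M N' Y) (case_prod g)"
      using bounded by (intro XY.P.integrable_const_bound[where B=c] g') auto
    from XY.integral_fst'[OF this] show ?thesis by simp
  qed
  also have "\<dots> = (\<integral>\<omega>. (\<integral>y. g (X \<omega>) y \<partial>distr M N' Y) \<partial>M)"
    using X Y g by (simp add: integral_distr)
  also have "\<dots> = (\<integral>\<omega>. (\<integral>\<omega>'. g (X \<omega>) (Y \<omega>') \<partial>M) \<partial>M)"
    using X Y measurable_Pair2[OF g measurable_space[OF X]]
    by (intro Bochner_Integration.integral_cong refl) (simp add: integral_distr)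
  finally show ?thesis .
qed

definition (in prob_space) mginf_input ::
  "real \<Rightarrow> (real \<Rightarrow> real) \<Rightarrow> (nat \<Rightarrow> 'a \<Rightarrow> real) \<Rightarrow> (nat \<Rightarrow> 'a \<Rightarrow> real) \<Rightarrow> bool" where
  "mginf_input lam B E S \<longleftrightarrow>
     indep_vars (\<lambda>_. borel) (\<lambda>i \<omega>. sample_path E S \<omega> i) UNIV \<and>
     (\<forall>n. distributed M lborel (E n) (exponential_density lam)) \<and>
     (\<forall>n. S n \<in> borel_measurable M) \<and>
     (\<forall>n x. prob {\<omega> \<in> space M. S n \<omega> \<le> x} = B x)"

context prob_space
begin

lemma AE_exponential_pos:
  assumes D: "distributed M lborel X (exponential_density lam)" and lam: "0 < lam"
  shows "AE \<omega> in M. 0 < X \<omega>"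
proof -
  have "\<P>(\<omega> in M. X \<omega> \<le> 0) = 0"
    using exponential_distributedD_le[OF D _ lam, of 0] by simp
  then show ?thesis
    using distributed_measurable[OF D] by (subst (asm) prob_Collect_eq_0) (auto simp: not_le)
qed

context
  fixes lam :: real and B :: "real \<Rightarrow> real" and E S :: "nat \<Rightarrow> 'a \<Rightarrow> real"
  assumes input: "mginf_input lam B E S" and lam: "0 < lam"
begin

lemma mginf_input_indep: "indep_vars (\<lambda>_. borel) (\<lambda>i \<omega>. sample_path E S \<omega> i) UNIV"
  and interarrival_exponential: "distributed M lborel (E n) (exponential_density lam)"
  and measurable_service: "S n \<in> borel_measurable M"
  and service_cdf: "prob {\<omega> \<in> space M. S n \<omega> \<le> x} = B x"
  using input by (auto simp: mginf_input_def)

lemma service_cdf_bounds: "0 \<le> B x \<and> B x \<le> 1"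
  using service_cdf[of 0 x] measure_nonneg[of M] prob_le_1 by metis

lemma measurable_sample_path: "sample_path E S \<in> measurable M path_space"
proof -
  have "(\<lambda>\<omega>. \<lambda>i\<in>UNIV. sample_path E S \<omega> i) \<in> measurable M path_space"
    using mginf_input_indep by (intro measurable_restrict) (auto simp: indep_vars_def)
  then show ?thesis by (simp add: restrict_def)
qed

lemma mginf_input_shift: "mginf_input lam B (\<lambda>n. E (Suc n)) (\<lambda>n. S (Suc n))"
proof -
  have "inj (map_sum Suc Suc)" by (simp add: sum.inj_map)
  moreover have "indep_vars (\<lambda>_. borel) (\<lambda>i \<omega>. sample_path E S \<omega> i) (range (map_sum Suc Suc))"
    using mginf_input_indep by (rule indep_vars_subset) simp
  ultimately have "indep_vars (\<lambda>_. borel) (\<lambda>i \<omega>. sample_path E S \<omega> (map_sum Suc Suc i)) UNIV"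
    using indep_vars_reindex by fastforce
  then show ?thesis
    using input by (simp add: mginf_input_def sample_path_map_sum_Suc)
qed

lemma AE_interarrival_pos: "AE \<omega> in M. \<forall>n. 0 < E n \<omega>"
  using AE_exponential_pos[OF interarrival_exponential lam] by (simp add: AE_all_countable)

lemma indep_first_customer:
  "indep_var (PiM {Inl 0, Inr 0} (\<lambda>_. borel)) (\<lambda>\<omega>. \<lambda>i\<in>{Inl 0, Inr 0}. sample_path E S \<omega> i)
     path_space (sample_path (\<lambda>n. E (Suc n)) (\<lambda>n. S (Suc n)))"
proof -
  have "(\<lambda>r. \<lambda>i\<in>UNIV. r (map_sum Suc Suc i)) \<in> measurable (PiM (range (map_sum Suc Suc)) (\<lambda>_. borel)) path_space"
    by (intro measurable_restrict measurable_component_singleton) auto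
  then have "(\<lambda>r. \<lambda>i. r (map_sum Suc Suc i)) \<in> measurable (PiM (range (map_sum Suc Suc)) (\<lambda>_. borel)) path_space"
    by (simp add: restrict_def)
  moreover have "map_sum Suc Suc j \<notin> {Inl 0, Inr 0}" for j by (cases j) auto
  ultimately have "indep_var (PiM {Inl 0, Inr 0} (\<lambda>_. borel)) (\<lambda>\<omega>. \<lambda>i\<in>{Inl 0, Inr 0}. sample_path E S \<omega> i)
     path_space (\<lambda>\<omega>. \<lambda>i. (\<lambda>j\<in>range (map_sum Suc Suc). sample_path E S \<omega> j) (map_sum Suc Suc i))"
    by (intro indep_var_restrict_compose[OF mginf_input_indep, where f="\<lambda>r. r"]) fastforce+
  moreover have "(\<lambda>i. (\<lambda>j\<in>range (map_sum Suc Suc). sample_path E S \<omega> j) (map_sum Suc Suc i))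
      = sample_path (\<lambda>n. E (Suc n)) (\<lambda>n. S (Suc n)) \<omega>" for \<omega>
    by (simp add: fun_eq_iff sample_path_map_sum_Suc)
  ultimately show ?thesis by simp
qed

lemma indep_first_interarrival_service: "indep_var borel (E 0) borel (S 0)"
proof -
  have "indep_var borel (\<lambda>\<omega>. (\<lambda>i\<in>{Inl 0}. sample_path E S \<omega> i) (Inl 0))
      borel (\<lambda>\<omega>. (\<lambda>i\<in>{Inr 0}. sample_path E S \<omega> i) (Inr 0))"
    by (intro indep_var_restrict_compose[OF mginf_input_indep, where f="\<lambda>r. r (Inl 0)" and g="\<lambda>r. r (Inr 0)"])
      auto
  then show ?thesis by simp
qed

lemma prob_arrivals_before_le:
  assumes "0 \<le> t"
  shows "prob {\<omega> \<in> space M. \<forall>n. arrival (sample_path E S \<omega>) n \<le> t} \<le> (1 - exp (- t * lam)) ^ Suc N"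
proof -
  let ?I = "Inl ` {..N} :: (nat + nat) set"
  let ?A = "\<lambda>i. (\<lambda>\<omega>. sample_path E S \<omega> i) -` {..t} \<inter> space M"
  have events: "?A i \<in> events" for i
    using measurable_path_component[OF measurable_sample_path] by (rule measurable_sets) simp
  have "AE \<omega> in M. (\<forall>n. arrival (sample_path E S \<omega>) n \<le> t) \<longrightarrow> \<omega> \<in> (\<Inter>i\<in>?I. ?A i)"
    using AE_interarrival_pos AE_space
  proof eventually_elim
    case (elim \<omega>)
    have "E i \<omega> \<le> arrival (sample_path E S \<omega>) i" for i
      using member_le_sum[of i "{..i}" "\<lambda>j. E j \<omega>"] elim by (simp add: arrival_def less_imp_le)
    then show ?case using elim by (fastforce intro: order_trans)
  qed
  then have "prob {\<omega> \<in> space M. \<forall>n. arrival (sample_path E S \<omega>) n \<le> t} \<le> prob (\<Inter>i\<in>?I. ?A i)"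
    by (intro finite_measure_mono_AE sets.finite_INT events) auto
  also have "\<dots> = (\<Prod>i\<in>?I. prob (?A i))"
    by (intro indep_varsD[OF mginf_input_indep]) auto
  also have "\<dots> = (\<Prod>i\<le>N. 1 - exp (- t * lam))"
    using exponential_distributedD_le[OF interarrival_exponential assms lam]
    by (subst prod.reindex) (auto simp: inj_on_def Int_def conj_commute)
  finally show ?thesis by simp
qed

lemma AE_arrival_unbounded: "AE \<omega> in M. \<forall>t. \<exists>n. t < arrival (sample_path E S \<omega>) n"
proof -
  have "AE \<omega> in M. \<exists>n. real m < arrival (sample_path E S \<omega>) n" for m :: nat
  proof -
    let ?A = "{\<omega> \<in> space M. \<forall>n. arrival (sample_path E S \<omega>) n \<le> real m}"
    have "?A \<in> events"
      using measurable_sample_path by measurable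
    moreover have "prob ?A \<le> 0"
      using prob_arrivals_before_le[of "real m"] lam
      by (intro LIMSEQ_le_const[OF LIMSEQ_ignore_initial_segment[OF LIMSEQ_power_zero, of _ 1]]) auto
    ultimately have "AE \<omega> in M. \<omega> \<notin> ?A"
      using measure_nonneg[of M ?A] prob_eq_0 by simp
    then show ?thesis by (auto simp: not_le)
  qed
  then have "AE \<omega> in M. \<forall>m::nat. \<exists>n. real m < arrival (sample_path E S \<omega>) n"
    by (simp add: AE_all_countable)
  then show ?thesis
    by eventually_elim (meson reals_Archimedean2 order.strict_trans)
qed

end

end

section \<open>The renewal equation\<close>

lemma (in prob_space) integral_of_bool: "(\<integral>\<omega>. of_bool (P \<omega>) \<partial>M) = prob {\<omega> \<in> space M. P \<omega>}"
proof -
  have "(\<integral>\<omega>. of_bool (P \<omega>) \<partial>M) = (\<integral>\<omega>. indicator {\<omega> \<in> space M. P \<omega>} \<omega> \<partial>M)"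
    by (intro Bochner_Integration.integral_cong) (auto simp: indicator_def)
  also have "\<dots> = prob ({\<omega> \<in> space M. P \<omega>} \<inter> space M)"
    by (rule Bochner_Integration.integral_indicator)
  finally show ?thesis by (simp add: Int_absorb2)
qed

definition (in prob_space) queue_dist :: "(nat \<Rightarrow> 'a \<Rightarrow> real) \<Rightarrow> (nat \<Rightarrow> 'a \<Rightarrow> real) \<Rightarrow> real \<Rightarrow> nat \<Rightarrow> real" where
  "queue_dist E S t k = prob {\<omega> \<in> space M. card (in_system t (sample_path E S \<omega>)) = k}"

lemma (in prob_space) queue_dist_bounds: "0 \<le> queue_dist E S t k \<and> queue_dist E S t k \<le> 1"
  by (simp add: queue_dist_def)

text \<open>The distribution of the queue at time \<open>t\<close> given that the first customer arrives at \<open>e\<close>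
  and needs service time \<open>s\<close>, when \<open>f\<close> is the distribution of the queue formed by the other customers.\<close>

definition given_first_customer ::
  "(real \<Rightarrow> nat \<Rightarrow> real) \<Rightarrow> real \<Rightarrow> nat \<Rightarrow> real \<Rightarrow> real \<Rightarrow> real" where
  "given_first_customer f t k e s =
     (if e \<le> t \<and> t < e + s then (if k = 0 then 0 else f (t - e) (k - 1)) else f (t - e) k)"

definition renewal_kernel :: "(real \<Rightarrow> real) \<Rightarrow> (real \<Rightarrow> nat \<Rightarrow> real) \<Rightarrow> real \<Rightarrow> nat \<Rightarrow> real \<Rightarrow> real" where
  "renewal_kernel B f t k e =
     (if e \<le> t then B (t - e) * f (t - e) k + (1 - B (t - e)) * (if k = 0 then 0 else f (t - e) (k - 1))
      else f (t - e) k)"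

lemma borel_measurable_given_first_customer:
  assumes "\<And>j. (\<lambda>v. f v j) \<in> borel_measurable borel"
  shows "case_prod (given_first_customer f t k) \<in> borel_measurable (borel \<Otimes>\<^sub>M borel)"
proof -
  have [measurable]: "(\<lambda>p::real \<times> real. f (t - fst p) j) \<in> borel_measurable (borel \<Otimes>\<^sub>M borel)" for j
    using measurable_compose[of "\<lambda>p. t - fst p" "borel \<Otimes>\<^sub>M borel" borel "\<lambda>v. f v j"] assms by auto
  show ?thesis unfolding given_first_customer_def by measurable
qed

lemma given_first_customer_bound:
  "(\<And>v j. 0 \<le> f v j \<and> f v j \<le> 1) \<Longrightarrow> \<bar>given_first_customer f t k e s\<bar> \<le> 1"
  by (auto simp: given_first_customer_def abs_le_iff intro: order_trans[of _ 0])

lemma renewal_kernel_bound: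
  assumes f: "\<And>v j. 0 \<le> f v j \<and> f v j \<le> 1" and B: "\<And>x. 0 \<le> B x \<and> B x \<le> 1"
  shows "\<bar>renewal_kernel B f t k e\<bar> \<le> 1"
proof -
  let ?b = "B (t - e)" and ?p = "if k = 0 then 0 else f (t - e) (k - 1)"
  have "0 \<le> ?b" "?b \<le> 1" "0 \<le> ?p" "?p \<le> 1" using B f by auto
  moreover have "0 \<le> f (t - e) k" "f (t - e) k \<le> 1" using f by auto
  ultimately have "0 \<le> ?b * f (t - e) k + (1 - ?b) * ?p" "?b * f (t - e) k + (1 - ?b) * ?p \<le> ?b * 1 + (1 - ?b) * 1"
    by (intro add_nonneg_nonneg mult_nonneg_nonneg add_mono mult_left_mono; simp)+
  then show ?thesis using f[of "t - e" k] by (auto simp: renewal_kernel_def)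
qed

lemma borel_measurable_renewal_kernel:
  assumes "\<And>j. (\<lambda>v. f v j) \<in> borel_measurable borel" and "B \<in> borel_measurable borel"
  shows "renewal_kernel B f t k \<in> borel_measurable borel"
proof -
  have [measurable]: "(\<lambda>e. f (t - e) j) \<in> borel_measurable borel" for j
    using measurable_compose[of "\<lambda>e. t - e" borel borel "\<lambda>v. f v j"] assms(1) by auto
  have [measurable]: "(\<lambda>e. B (t - e)) \<in> borel_measurable borel"
    using measurable_compose[of "\<lambda>e. t - e" borel borel B] assms(2) by auto
  show ?thesis unfolding renewal_kernel_def[abs_def] by measurable
qed

context prob_space
begin

lemma integral_given_first_customer:
  assumes S: "S \<in> borel_measurable M" and cdf: "\<And>x. prob {\<omega> \<in> space M. S \<omega> \<le> x} = B x"
  shows "(\<integral>\<omega>. given_first_customer f t k e (S \<omega>) \<partial>M) = renewal_kernel B f t k e"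
proof (cases "e \<le> t")
  case True
  let ?a = "if k = 0 then 0 else f (t - e) (k - 1)" and ?b = "f (t - e) k"
  let ?U = "{\<omega> \<in> space M. t - e < S \<omega>}" and ?V = "{\<omega> \<in> space M. S \<omega> \<le> t - e}"
  have U: "?U \<in> events" and V: "?V \<in> events" using S by measurable
  have "(\<integral>\<omega>. given_first_customer f t k e (S \<omega>) \<partial>M) = (\<integral>\<omega>. ?a * indicator ?U \<omega> + ?b * indicator ?V \<omega> \<partial>M)"
    using True by (intro Bochner_Integration.integral_cong) (auto simp: given_first_customer_def indicator_def)
  also have "\<dots> = ?a * prob ?U + ?b * prob ?V"
    using U V by (simp add: Bochner_Integration.integral_add integrable_real_indicator emeasure_eq_measure)
  also have "prob ?V = B (t - e)" by (rule cdf)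
  also have "?U = space M - ?V" by auto
  also have "prob (space M - ?V) = 1 - B (t - e)"
    using prob_compl[OF V] cdf[of "t - e"] by simp
  finally show ?thesis
    using True by (simp add: renewal_kernel_def algebra_simps)
qed (simp add: given_first_customer_def renewal_kernel_def prob_space)

context
  fixes lam :: real and B :: "real \<Rightarrow> real" and E S :: "nat \<Rightarrow> 'a \<Rightarrow> real"
  assumes input: "mginf_input lam B E S" and lam: "0 < lam"
begin

lemma queue_dist_neg:
  assumes "t < 0" shows "queue_dist E S t k = poisson_prob 0 k"
proof -
  have "AE \<omega> in M. card (in_system t (sample_path E S \<omega>)) = 0"
    using AE_interarrival_pos[OF input lam]
    by eventually_elim (simp add: in_system_neg[OF _ assms] less_imp_le)
  then have "AE \<omega> in M. (card (in_system t (sample_path E S \<omega>)) = k) = (k = 0)"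
    by eventually_elim auto
  then have "queue_dist E S t k = \<P>(\<omega> in M. k = 0)"
    unfolding queue_dist_def
    using measurable_sample_path[OF input lam] by (intro prob_eq_AE) (measurable, auto)
  then show ?thesis
    by (cases "k = 0") (simp_all add: poisson_prob_0 prob_space)
qed

lemma borel_measurable_queue_dist: "(\<lambda>t. queue_dist E S t k) \<in> borel_measurable borel"
proof -
  have [measurable]: "sample_path E S \<in> measurable M path_space"
    by (rule measurable_sample_path[OF input lam])
  let ?Q = "{p \<in> space (borel \<Otimes>\<^sub>M M). card (in_system (fst p) (sample_path E S (snd p))) = k}"
  have "?Q \<in> sets (borel \<Otimes>\<^sub>M M)" by measurable
  from measurable_emeasure_Pair[OF this] have "(\<lambda>t. enn2real (emeasure M (Pair t -` ?Q))) \<in> borel_measurable borel"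
    by measurable
  moreover have "Pair t -` ?Q = {\<omega> \<in> space M. card (in_system t (sample_path E S \<omega>)) = k}" for t
    by (auto simp: space_pair_measure)
  ultimately have "(\<lambda>t. measure M {\<omega> \<in> space M. card (in_system t (sample_path E S \<omega>)) = k}) \<in> borel_measurable borel"
    by (simp add: measure_def)
  then show ?thesis by (simp add: queue_dist_def)
qed

end

(* Reopened so that the facts above are available for the shifted input. *)
context
  fixes lam :: real and B :: "real \<Rightarrow> real" and E S :: "nat \<Rightarrow> 'a \<Rightarrow> real"
  assumes input: "mginf_input lam B E S" and lam: "0 < lam"
begin

lemma AE_card_in_system_first_customer:
  "AE \<omega> in M. card (in_system t (sample_path E S \<omega>)) = of_bool (E 0 \<omega> \<le> t \<and> t < E 0 \<omega> + S 0 \<omega>)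
     + card (in_system (t - E 0 \<omega>) (sample_path (\<lambda>n. E (Suc n)) (\<lambda>n. S (Suc n)) \<omega>))"
  using AE_arrival_unbounded[OF mginf_input_shift[OF input lam] lam]
    AE_interarrival_pos[OF mginf_input_shift[OF input lam] lam]
proof eventually_elim
  case (elim \<omega>)
  let ?Z = "sample_path (\<lambda>n. E (Suc n)) (\<lambda>n. S (Suc n)) \<omega>"
  from elim(1) obtain N where "t - E 0 \<omega> < arrival ?Z N" by blast
  with elim(2) have "finite (in_system (t - E 0 \<omega>) ?Z)"
    by (intro finite_in_system) (auto intro: less_imp_le)
  then show ?case
    using card_in_system_shift[of t "sample_path E S \<omega>"] by (simp add: shift_sample_path)
qed

lemma queue_dist_given_first_customer:
  "queue_dist E S t k =
     (\<integral>\<omega>. given_first_customer (queue_dist (\<lambda>n. E (Suc n)) (\<lambda>n. S (Suc n))) t k (E 0 \<omega>) (S 0 \<omega>) \<partial>M)"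
proof -
  define E' S' where "E' = (\<lambda>n. E (Suc n))" and "S' = (\<lambda>n. S (Suc n))"
  let ?X = "\<lambda>\<omega>. \<lambda>i\<in>{Inl 0, Inr 0}. sample_path E S \<omega> i" and ?Z = "sample_path E' S'"
  define first_present where "first_present y \<longleftrightarrow> y (Inl 0) \<le> t \<and> t < y (Inl 0) + y (Inr 0)"
    for y :: "nat + nat \<Rightarrow> real"
  define h :: "_ \<Rightarrow> _ \<Rightarrow> real" where "h y z = of_bool (if first_present y then 0 < k \<and> card (in_system (t - y (Inl 0)) z) = k - 1
    else card (in_system (t - y (Inl 0)) z) = k)" for y z
  have [measurable]: "?X \<in> measurable M (PiM {Inl 0, Inr 0} (\<lambda>_. borel))" "?Z \<in> measurable M path_space"
    using indep_first_customer[OF input lam] by (auto simp: E'_def S'_def dest: indep_var_rv1 indep_var_rv2)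
  have [measurable]: "Measurable.pred (PiM {Inl 0, Inr 0} (\<lambda>_. borel)) first_present"
    unfolding first_present_def by measurable
  have h [measurable]: "case_prod h \<in> borel_measurable (PiM {Inl 0, Inr 0} (\<lambda>_. borel) \<Otimes>\<^sub>M path_space)"
    unfolding h_def by measurable
  have "AE \<omega> in M. of_bool (card (in_system t (sample_path E S \<omega>)) = k) = h (?X \<omega>) (?Z \<omega>)"
    using AE_card_in_system_first_customer[of t]
    by eventually_elim (auto simp: E'_def S'_def h_def first_present_def)
  moreover have "(\<lambda>\<omega>. h (?X \<omega>) (?Z \<omega>)) \<in> borel_measurable M"
    using measurable_compose[OF measurable_Pair h] by simp
  ultimately have "queue_dist E S t k = (\<integral>\<omega>. h (?X \<omega>) (?Z \<omega>) \<partial>M)"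
    unfolding queue_dist_def integral_of_bool[symmetric]
    using measurable_sample_path[OF input lam] by (intro integral_cong_AE) measurable
  also have "\<dots> = (\<integral>\<omega>. (\<integral>\<omega>'. h (?X \<omega>) (?Z \<omega>') \<partial>M) \<partial>M)"
    using indep_first_customer[OF input lam]
    by (intro integral_indep_var[OF _ h, where c=1]) (auto simp: h_def E'_def S'_def)
  also have "\<dots> = (\<integral>\<omega>. given_first_customer (queue_dist E' S') t k (E 0 \<omega>) (S 0 \<omega>) \<partial>M)"
    by (intro Bochner_Integration.integral_cong)
      (auto simp: h_def first_present_def integral_of_bool given_first_customer_def queue_dist_def)
  finally show ?thesis by (simp add: E'_def S'_def)
qed

lemma renewal_equation:
  "queue_dist E S t k = (\<integral>\<omega>. renewal_kernel B (queue_dist (\<lambda>n. E (Suc n)) (\<lambda>n. S (Suc n))) t k (E 0 \<omega>) \<partial>M)"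
proof -
  let ?f = "queue_dist (\<lambda>n. E (Suc n)) (\<lambda>n. S (Suc n))"
  have "queue_dist E S t k = (\<integral>\<omega>. given_first_customer ?f t k (E 0 \<omega>) (S 0 \<omega>) \<partial>M)"
    by (rule queue_dist_given_first_customer)
  also have "\<dots> = (\<integral>\<omega>. (\<integral>\<omega>'. given_first_customer ?f t k (E 0 \<omega>) (S 0 \<omega>') \<partial>M) \<partial>M)"
    using borel_measurable_queue_dist[OF mginf_input_shift[OF input lam] lam]
    by (intro integral_indep_var[OF indep_first_interarrival_service[OF input lam], where c=1]
        borel_measurable_given_first_customer given_first_customer_bound queue_dist_bounds)
  also have "\<dots> = (\<integral>\<omega>. renewal_kernel B ?f t k (E 0 \<omega>) \<partial>M)"
    using measurable_service[OF input lam] service_cdf[OF input lam]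
    by (simp add: integral_given_first_customer)
  finally show ?thesis .
qed

end

end

section \<open>The Poisson solution of the renewal equation\<close>

definition poisson_transient :: "real \<Rightarrow> (real \<Rightarrow> real) \<Rightarrow> real \<Rightarrow> nat \<Rightarrow> real" where
  "poisson_transient lam B t k = poisson_prob (lam * integrated_survival B t) k"

lemma poisson_transient_neg: "t < 0 \<Longrightarrow> poisson_transient lam B t k = poisson_prob 0 k"
  by (simp add: poisson_transient_def integrated_survival_nonpos)

context
  fixes lam :: real and B :: "real \<Rightarrow> real"
  assumes lam: "0 < lam" and B_cont: "continuous_on UNIV B" and B_le_1: "\<And>x. B x \<le> 1"
begin

lemma poisson_transient_bounds: "0 \<le> poisson_transient lam B t k \<and> poisson_transient lam B t k \<le> 1"
  using integrated_survival_nonneg[OF B_cont B_le_1, of t] lam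
  by (simp add: poisson_transient_def poisson_prob_nonneg poisson_prob_le_1)

lemma borel_measurable_poisson_transient: "(\<lambda>t. poisson_transient lam B t k) \<in> borel_measurable borel"
  using borel_measurable_integrated_survival[OF B_cont B_le_1]
  unfolding poisson_transient_def poisson_prob_def by measurable

lemma has_integral_renewal_kernel_poisson_transient:
  assumes u: "0 \<le> u"
  shows "((\<lambda>x. lam * exp (- x * lam) * renewal_kernel B (poisson_transient lam B) u k x)
    has_integral poisson_transient lam B u k - exp (- u * lam) * poisson_prob 0 k) {0..u}"
proof -
  define H where "H x = - exp (- x * lam) * poisson_transient lam B (u - x) k" for x
  have "continuous_on {0..u} (\<lambda>x. integrated_survival B (u - x))"
    by (rule continuous_on_compose2[OF continuous_on_integrated_survival[OF B_cont, of u]])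
      (auto intro!: continuous_intros)
  then have "continuous_on {0..u} H"
    unfolding H_def poisson_transient_def poisson_prob_def by (intro continuous_intros) auto
  moreover have "(H has_vector_derivative lam * exp (- x * lam) * renewal_kernel B (poisson_transient lam B) u k x) (at x)"
    if x: "x \<in> {0<..<u}" for x
  proof -
    let ?m = "lam * integrated_survival B (u - x)"
    have "((\<lambda>x. lam * integrated_survival B (u - x)) has_real_derivative lam * ((1 - B (u - x)) * - 1)) (at x)"
      using x by (auto intro!: derivative_eq_intros DERIV_chain2[OF has_real_derivative_integrated_survival[OF B_cont]])
    from DERIV_chain2[OF has_real_derivative_poisson_prob this]
    have "((\<lambda>x. poisson_transient lam B (u - x) k) has_real_derivative
        (poisson_prob_prev ?m k - poisson_prob ?m k) * (lam * ((1 - B (u - x)) * - 1))) (at x)"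
      by (simp add: poisson_transient_def)
    then have "(H has_real_derivative exp (- x * lam) * lam * poisson_prob ?m k
        + (poisson_prob_prev ?m k - poisson_prob ?m k) * (lam * ((1 - B (u - x)) * - 1)) * - exp (- x * lam)) (at x)"
      unfolding H_def by (auto intro!: derivative_eq_intros simp: poisson_transient_def)
    moreover have "exp (- x * lam) * lam * poisson_prob ?m k
        + (poisson_prob_prev ?m k - poisson_prob ?m k) * (lam * ((1 - B (u - x)) * - 1)) * - exp (- x * lam)
        = lam * exp (- x * lam) * renewal_kernel B (poisson_transient lam B) u k x"
      using x by (simp add: renewal_kernel_def poisson_transient_def poisson_prob_prev_def algebra_simps)
    ultimately show ?thesis by (simp add: has_real_derivative_iff_has_vector_derivative)
  qed
  ultimately have "((\<lambda>x. lam * exp (- x * lam) * renewal_kernel B (poisson_transient lam B) u k x)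
    has_integral H u - H 0) {0..u}"
    by (intro fundamental_theorem_of_calculus_interior u)
  then show ?thesis
    by (simp add: H_def poisson_transient_def integrated_survival_nonpos)
qed

end

lemma (in prob_space) integral_exponential_eventually_const:
  assumes D: "distributed M lborel X (exponential_density lam)" and lam: "0 < lam" and u: "0 \<le> u"
    and g: "g \<in> borel_measurable borel" and bound: "\<And>x. \<bar>g x\<bar> \<le> b" and const: "\<And>x. u < x \<Longrightarrow> g x = c"
  shows "(\<integral>\<omega>. g (X \<omega>) \<partial>M) = c * exp (- u * lam) + integral {0..u} (\<lambda>x. lam * exp (- x * lam) * g x)"
proof -
  have [measurable]: "X \<in> borel_measurable M" "g \<in> borel_measurable borel"
    using distributed_measurable[OF D] g by simp_all
  let ?g = "\<lambda>x. indicator {..u} x * g x :: real"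
  have int_g: "integrable M (\<lambda>\<omega>. ?g (X \<omega>))"
    using order_trans[OF abs_ge_zero bound]
    by (intro integrable_const_bound[where B=b]) (auto simp: indicator_def bound)
  have U: "{\<omega> \<in> space M. u < X \<omega>} \<in> events" by measurable
  have "(\<integral>\<omega>. g (X \<omega>) \<partial>M) = (\<integral>\<omega>. c * indicator {\<omega> \<in> space M. u < X \<omega>} \<omega> + ?g (X \<omega>) \<partial>M)"
    by (intro Bochner_Integration.integral_cong) (auto simp: indicator_def const)
  also have "\<dots> = c * prob {\<omega> \<in> space M. u < X \<omega>} + (\<integral>\<omega>. ?g (X \<omega>) \<partial>M)"
    using U int_g by (subst Bochner_Integration.integral_add) (auto simp: integrable_real_indicator emeasure_eq_measure)
  also have "prob {\<omega> \<in> space M. u < X \<omega>} = exp (- u * lam)"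
    using exponential_distributedD_gt[OF D u lam] by simp
  also have "(\<integral>\<omega>. ?g (X \<omega>) \<partial>M) = (\<integral>x. exponential_density lam x * ?g x \<partial>lborel)"
    using exponential_density_nonneg[OF lam] by (intro distributed_integral[OF D, symmetric]) auto
  also have "\<dots> = integral UNIV (\<lambda>x. exponential_density lam x * ?g x)"
    using distributed_integrable[OF D, of ?g] exponential_density_nonneg[OF lam] int_g
    by (intro integral_lborel[symmetric]) auto
  also have "\<dots> = integral UNIV (\<lambda>x. if x \<in> {0..u} then lam * exp (- x * lam) * g x else 0)"
    by (intro arg_cong[where f="integral UNIV"] ext) (auto simp: exponential_density_def indicator_def)
  also have "\<dots> = integral {0..u} (\<lambda>x. lam * exp (- x * lam) * g x)"
    by (rule integral_restrict_UNIV)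
  finally show ?thesis .
qed

lemma (in prob_space) poisson_transient_renewal_equation:
  assumes D: "distributed M lborel X (exponential_density lam)" and lam: "0 < lam" and u: "0 \<le> u"
    and B_cont: "continuous_on UNIV B" and B_bounds: "\<And>x. 0 \<le> B x \<and> B x \<le> 1"
  shows "poisson_transient lam B u k = (\<integral>\<omega>. renewal_kernel B (poisson_transient lam B) u k (X \<omega>) \<partial>M)"
proof -
  have B_le_1: "B x \<le> 1" for x using B_bounds by simp
  have "(\<integral>\<omega>. renewal_kernel B (poisson_transient lam B) u k (X \<omega>) \<partial>M) = poisson_prob 0 k * exp (- u * lam)
    + integral {0..u} (\<lambda>x. lam * exp (- x * lam) * renewal_kernel B (poisson_transient lam B) u k x)"
    using borel_measurable_poisson_transient[OF lam B_cont B_le_1] borel_measurable_continuous_onI[OF B_cont]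
      poisson_transient_bounds[OF lam B_cont B_le_1] B_bounds
    by (intro integral_exponential_eventually_const[OF D lam u, where b=1]
        borel_measurable_renewal_kernel renewal_kernel_bound)
      (auto simp: renewal_kernel_def poisson_transient_neg)
  also have "\<dots> = poisson_transient lam B u k"
    using integral_unique[OF has_integral_renewal_kernel_poisson_transient[OF lam B_cont B_le_1 u]] by simp
  finally show ?thesis ..
qed

section \<open>Uniqueness of the solution\<close>

lemma renewal_kernel_diff:
  assumes diff: "\<And>w j. w \<le> T \<Longrightarrow> \<bar>f w j - g w j\<bar> \<le> (if w < 0 then 0 else K)"
    and B: "\<And>x. 0 \<le> B x \<and> B x \<le> 1" and "0 \<le> e" and "v \<le> T"
  shows "\<bar>renewal_kernel B f v j e - renewal_kernel B g v j e\<bar> \<le> K * indicator {..v} e"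
proof (cases "e \<le> v")
  case True
  then have w: "v - e \<le> T" "\<not> v - e < 0" using assms by auto
  then have d1: "\<bar>f (v - e) j - g (v - e) j\<bar> \<le> K" and K: "0 \<le> K"
    using diff[OF w(1), of j] by auto
  have d2: "\<bar>(if j = 0 then 0 else f (v - e) (j - 1)) - (if j = 0 then 0 else g (v - e) (j - 1))\<bar> \<le> K"
    using diff[OF w(1), of "j - 1"] w K by auto
  have b: "0 \<le> B (v - e)" "B (v - e) \<le> 1" using B by auto
  have "renewal_kernel B f v j e - renewal_kernel B g v j e = B (v - e) * (f (v - e) j - g (v - e) j) +
     (1 - B (v - e)) * ((if j = 0 then 0 else f (v - e) (j - 1)) - (if j = 0 then 0 else g (v - e) (j - 1)))"
    using True by (simp add: renewal_kernel_def algebra_simps)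
  also have "\<bar>\<dots>\<bar> \<le> B (v - e) * K + (1 - B (v - e)) * K"
    using b d1 d2
    by (intro order_trans[OF abs_triangle_ineq] add_mono) (auto simp: abs_mult intro: mult_left_mono)
  finally show ?thesis using True by (simp add: algebra_simps)
next
  case False
  then have "v - e \<le> T" "v - e < 0" using assms by auto
  then show ?thesis using False diff[of "v - e" j] by (simp add: renewal_kernel_def)
qed

text \<open>The two kernels agree when the first arrival \<open>X\<close> exceeds \<open>v\<close>, so only the event \<open>X \<le> v\<close>,
  of probability at most \<open>1 - exp (- T * lam) < 1\<close>, contributes to the difference.\<close>

lemma (in prob_space) renewal_kernel_contraction:
  assumes D: "distributed M lborel X (exponential_density lam)" and lam: "0 < lam"
    and meas: "\<And>j. (\<lambda>v. f v j) \<in> borel_measurable borel" "\<And>j. (\<lambda>v. g v j) \<in> borel_measurable borel"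
    and bounds: "\<And>v j. 0 \<le> f v j \<and> f v j \<le> 1" "\<And>v j. 0 \<le> g v j \<and> g v j \<le> 1"
    and diff: "\<And>w j. w \<le> T \<Longrightarrow> \<bar>f w j - g w j\<bar> \<le> (if w < 0 then 0 else K)"
    and B: "B \<in> borel_measurable borel" "\<And>x. 0 \<le> B x \<and> B x \<le> 1" and v: "0 \<le> v" "v \<le> T"
  shows "\<bar>(\<integral>\<omega>. renewal_kernel B f v j (X \<omega>) \<partial>M) - (\<integral>\<omega>. renewal_kernel B g v j (X \<omega>) \<partial>M)\<bar>
    \<le> K * (1 - exp (- T * lam))"
proof -
  have X [measurable]: "X \<in> borel_measurable M" using distributed_measurable[OF D] by simp
  have [measurable]: "renewal_kernel B f v j \<in> borel_measurable borel" "renewal_kernel B g v j \<in> borel_measurable borel"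
    using meas B by (auto intro: borel_measurable_renewal_kernel)
  have int: "integrable M (\<lambda>\<omega>. renewal_kernel B h v j (X \<omega>))"
    if "renewal_kernel B h v j \<in> borel_measurable borel" "\<And>v j. 0 \<le> h v j \<and> h v j \<le> 1" for h
    using that B renewal_kernel_bound[of h B] by (intro integrable_const_bound[where B=1]) auto
  have K: "0 \<le> K" using diff[OF v(2), of 0] v by auto
  let ?U = "{\<omega> \<in> space M. X \<omega> \<le> v}"
  have U: "?U \<in> events" by measurable
  have int_f: "integrable M (\<lambda>\<omega>. renewal_kernel B f v j (X \<omega>))"
    and int_g: "integrable M (\<lambda>\<omega>. renewal_kernel B g v j (X \<omega>))"
    using int bounds by auto
  have "\<bar>(\<integral>\<omega>. renewal_kernel B f v j (X \<omega>) \<partial>M) - (\<integral>\<omega>. renewal_kernel B g v j (X \<omega>) \<partial>M)\<bar>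
      = \<bar>\<integral>\<omega>. renewal_kernel B f v j (X \<omega>) - renewal_kernel B g v j (X \<omega>) \<partial>M\<bar>"
    by (simp only: Bochner_Integration.integral_diff[OF int_f int_g])
  also have "\<dots> \<le> (\<integral>\<omega>. \<bar>renewal_kernel B f v j (X \<omega>) - renewal_kernel B g v j (X \<omega>)\<bar> \<partial>M)"
    by (rule integral_abs_bound)
  also have "\<dots> \<le> (\<integral>\<omega>. K * indicator ?U \<omega> \<partial>M)"
  proof (rule integral_mono_AE)
    show "AE \<omega> in M. \<bar>renewal_kernel B f v j (X \<omega>) - renewal_kernel B g v j (X \<omega>)\<bar> \<le> K * indicator ?U \<omega>"
      using AE_exponential_pos[OF D lam] AE_space
    proof eventually_elim
      case (elim \<omega>)
      have "\<bar>renewal_kernel B f v j (X \<omega>) - renewal_kernel B g v j (X \<omega>)\<bar> \<le> K * indicator {..v} (X \<omega>)"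
        using elim v by (intro renewal_kernel_diff[OF diff B(2)]) auto
      then show ?case using elim by (simp add: indicator_def)
    qed
  qed (use int_f int_g U in \<open>auto simp: integrable_real_indicator emeasure_eq_measure\<close>)
  also have "\<dots> = K * (1 - exp (- v * lam))"
    using U exponential_distributedD_le[OF D v(1) lam] by simp
  also have "\<dots> \<le> K * (1 - exp (- T * lam))"
    using v lam K by (intro mult_left_mono) auto
  finally show ?thesis .
qed

lemma (in prob_space) queue_dist_eq_poisson_transient_neg:
  "mginf_input lam B E S \<Longrightarrow> 0 < lam \<Longrightarrow> t < 0 \<Longrightarrow> queue_dist E S t k = poisson_transient lam B t k"
  by (simp add: queue_dist_neg poisson_transient_neg)

lemma (in prob_space) queue_dist_poisson_transient_diff:
  assumes lam: "0 < lam" and B_cont: "continuous_on UNIV B"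
    and input: "mginf_input lam B E S" and "v \<le> T"
  shows "\<bar>queue_dist E S v j - poisson_transient lam B v j\<bar> \<le> (if v < 0 then 0 else (1 - exp (- T * lam)) ^ n)"
  using input \<open>v \<le> T\<close>
proof (induction n arbitrary: E S v j)
  case 0
  have "0 \<le> poisson_transient lam B v j \<and> poisson_transient lam B v j \<le> 1"
    using poisson_transient_bounds[OF lam B_cont] service_cdf_bounds[OF 0(1) lam] by blast
  then show ?case
    using queue_dist_eq_poisson_transient_neg[OF 0(1) lam] queue_dist_bounds[of E S v j] by auto
next
  case (Suc n)
  let ?f = "queue_dist (\<lambda>n. E (Suc n)) (\<lambda>n. S (Suc n))"
  have input: "mginf_input lam B E S" and input': "mginf_input lam B (\<lambda>n. E (Suc n)) (\<lambda>n. S (Suc n))"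
    using Suc(2) mginf_input_shift[OF Suc(2) lam] by auto
  have B: "B \<in> borel_measurable borel" "\<And>x. 0 \<le> B x \<and> B x \<le> 1"
    using borel_measurable_continuous_onI[OF B_cont] service_cdf_bounds[OF input lam] by auto
  show ?case
  proof (cases "v < 0")
    case False
    have "\<bar>queue_dist E S v j - poisson_transient lam B v j\<bar> =
      \<bar>(\<integral>\<omega>. renewal_kernel B ?f v j (E 0 \<omega>) \<partial>M)
        - (\<integral>\<omega>. renewal_kernel B (poisson_transient lam B) v j (E 0 \<omega>) \<partial>M)\<bar>"
      using False renewal_equation[OF input lam]
        poisson_transient_renewal_equation[OF interarrival_exponential[OF input lam] lam _ B_cont B(2)]
      by simp
    also have "\<dots> \<le> (1 - exp (- T * lam)) ^ n * (1 - exp (- T * lam))"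
      using Suc.IH[OF input'] False Suc(3) B(2) poisson_transient_bounds[OF lam B_cont]
      by (intro renewal_kernel_contraction[OF interarrival_exponential[OF input lam] lam]
          borel_measurable_queue_dist[OF input' lam] borel_measurable_poisson_transient[OF lam B_cont]
          queue_dist_bounds B) auto
    finally show ?thesis using False by (simp add: mult.commute)
  qed (use queue_dist_eq_poisson_transient_neg[OF input lam] in simp)
qed

lemma (in prob_space) queue_dist_eq_poisson_transient:
  assumes input: "mginf_input lam B E S" and lam: "0 < lam" and B_cont: "continuous_on UNIV B"
  shows "queue_dist E S t k = poisson_transient lam B t k"
proof (cases "t < 0")
  case False
  have "\<bar>queue_dist E S t k - poisson_transient lam B t k\<bar> \<le> (1 - exp (- t * lam)) ^ n" for n
    using queue_dist_poisson_transient_diff[OF lam B_cont input order_refl[of t], where j=k and n=n] False by simp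
  then have "\<bar>queue_dist E S t k - poisson_transient lam B t k\<bar> \<le> 0"
    using False lam by (intro LIMSEQ_le_const[OF LIMSEQ_power_zero]) auto
  then show ?thesis by simp
qed (rule queue_dist_eq_poisson_transient_neg[OF input lam])

lemma poisson_transient_convergence:
  assumes lam: "0 \<le> lam" and B_cont: "continuous_on UNIV B" and B_le_1: "\<And>x. B x \<le> 1"
    and \<mu>: "0 < \<mu>" and tail: "\<And>x. 0 \<le> x \<Longrightarrow> 1 - B x \<le> C * exp (- \<mu> * x)" and t: "0 \<le> t"
  shows "\<bar>poisson_transient lam B t k - poisson_prob (lam * (LINT x:{0..}|lborel. 1 - B x)) k\<bar>
    \<le> lam * C / \<mu> * exp (- \<mu> * t)"
proof -
  let ?\<rho> = "LINT x:{0..}|lborel. 1 - B x" and ?a = "integrated_survival B t"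
  have a: "0 \<le> ?a" "?a \<le> ?\<rho>"
    using integrated_survival_nonneg[OF B_cont B_le_1] integrated_survival_le_mean[OF B_cont B_le_1 \<mu> tail t]
    by auto
  have "\<bar>poisson_transient lam B t k - poisson_prob (lam * ?\<rho>) k\<bar> \<le> \<bar>lam * ?a - lam * ?\<rho>\<bar>"
    unfolding poisson_transient_def using a lam by (intro poisson_prob_lipschitz) auto
  also have "\<dots> = lam * (?\<rho> - ?a)"
    using mult_left_mono[OF a(2) lam] by (simp add: right_diff_distrib)
  also have "\<dots> \<le> lam * (C / \<mu> * exp (- \<mu> * t))"
    using mean_minus_integrated_survival[OF B_cont B_le_1 \<mu> tail t] lam by (intro mult_left_mono) auto
  finally show ?thesis by simp
qed

theorem mainTheorem2:
  fixes M :: "'a measure"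
    and E S :: "nat \<Rightarrow> 'a \<Rightarrow> real"
    and B :: "real \<Rightarrow> real"
    and lam C \<mu> :: real
  assumes "prob_space M"
    and lam: "lam > 0"
    and indep: "prob_space.indep_vars M (\<lambda>_. borel)
                  (\<lambda>i. case i of Inl n \<Rightarrow> E n | Inr n \<Rightarrow> S n) (UNIV :: (nat + nat) set)"
    and exp_arr: "\<And>n. distributed M lborel (E n) (exponential_density lam)"
    and serv_rv: "\<And>n. S n \<in> borel_measurable M"
    and serv_dist: "\<And>n x. measure M {\<omega> \<in> space M. S n \<omega> \<le> x} = B x"
    and B_cont: "continuous_on UNIV B"
    and B_nonneg_support: "\<And>x. x < 0 \<Longrightarrow> B x = 0"
    and tail: "C > 0" "\<mu> > 0" "\<And>x. x \<ge> 0 \<Longrightarrow> 1 - B x \<le> C * exp (- \<mu> * x)"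
  shows "\<exists>\<delta>>0. \<exists>C\<delta>>0.
           \<forall>t\<ge>0. (SUP k. \<bar>measure M {\<omega> \<in> space M. queue_length E S t \<omega> = k}
                          - poisson_prob (lam * (LINT x:{0..}|lborel. 1 - B x)) k\<bar>)
                  < C\<delta> * exp (- \<delta> * t)"
proof -
  interpret prob_space M by fact
  have "(\<lambda>i \<omega>. sample_path E S \<omega> i) = (\<lambda>i. case i of Inl n \<Rightarrow> E n | Inr n \<Rightarrow> S n)"
    by (auto simp: fun_eq_iff sample_path_def split: sum.split)
  then have input: "mginf_input lam B E S"
    using indep exp_arr serv_rv serv_dist by (simp add: mginf_input_def)
  have B_le_1: "B x \<le> 1" for x using service_cdf_bounds[OF input lam] by simp
  define K where "K = lam * C / \<mu>"
  have "\<bar>measure M {\<omega> \<in> space M. queue_length E S t \<omega> = k}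
      - poisson_prob (lam * (LINT x:{0..}|lborel. 1 - B x)) k\<bar> \<le> K * exp (- \<mu> * t)" if "0 \<le> t" for t k
    using queue_dist_eq_poisson_transient[OF input lam B_cont, of t k] that lam tail
      poisson_transient_convergence[OF _ B_cont B_le_1 tail(2,3) that, of lam k]
    by (simp add: queue_dist_def queue_length_eq_card_in_system K_def)
  then have "(SUP k. \<bar>measure M {\<omega> \<in> space M. queue_length E S t \<omega> = k}
      - poisson_prob (lam * (LINT x:{0..}|lborel. 1 - B x)) k\<bar>) < (K + 1) * exp (- \<mu> * t)" if "0 \<le> t" for t
    using that by (intro le_less_trans[OF cSUP_least]) (auto simp: distrib_right)
  moreover have "0 < K + 1"
    using lam tail unfolding K_def by (intro add_nonneg_pos divide_nonneg_pos mult_nonneg_nonneg) auto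
  ultimately show ?thesis using tail(2) by blast
qed

end
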